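(* Fix integers $T_0,K\ge1$ and $\delta\in(0,1)$, and let $\mathcal B^B$ be the adaptive buyer grid built from $T_0$ i.i.d. samples as described in the context. Then, with probability at least $1-\delta$ over the samples, $$\max_{q\in[0,1]}\mathrm{GFT}(q)-\max_{q\in\mathcal B^B}\mathrm{GFT}(q)\le \frac1K+\sqrt{\frac{\ln(2/\delta)}{2T_0}}.$$
   Context: There are $n\ge2$ buyers and one seller; valuations $(\mathbf b,s)\in[0,1]^{n+1}$ are drawn from a probability distribution $\mathcal P$ on $[0,1]^{n+1}$. Let $\bar b$ be the largest and $\underline b$ the second largest entry of $\mathbf b$ (with multiplicity). For $q\in[0,1]$, $\mathrm{GFT}(q):=\mathbb E_{(\mathbf b,s)\sim\mathcal P}[(\bar b-s)\mathbb I(s\le\max\{q,\underline b\})\mathbb I(\bar b\ge q)]$, and the maximum over $[0,1]$ is assumed to be attained. Adaptive buyer grid: draw $T_0$ i.i.d. samples $(\mathbf b_t,s_t)\sim\mathcal P$ and let $\mathcal B$ be the multiset $\{\bar b_1,\dots,\bar b_{T_0}\}$. Set $p_0:=0$. For $k=0,1,\dots,K-1$, let $p_{k+1}$ be the largest $q\in\mathcal B$ such that $|\{b\in\mathcal B: p_k<b<q\}|\le T_0/K$ (counting multiplicity), and $p_{k+1}:=1$ if no such $q$ exists. The grid is $\mathcal B^B:=\{0,p_1,\dots,p_K\}$. *)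

theory Defs
  imports "HOL-Probability.Probability"
begin

text \<open>Buyer valuations are vectors b :: real^'n (n = CARD('n) buyers), the seller value is s :: real.\<close>

definition top_val :: "real^'n \<Rightarrow> real" where
  "top_val b = Max (range (\<lambda>i. b $ i))"

text \<open>Second largest entry, counted with multiplicity: sort all entries ascending and take
  the second-to-last one.\<close>
definition second_val :: "real^'n \<Rightarrow> real" where
  "second_val b = (let xs = sorted_list_of_multiset (image_mset (\<lambda>i. b $ i) (mset_set UNIV))
                   in xs ! (length xs - 2))"

definition GFT :: "((real^'n) \<times> real) measure \<Rightarrow> real \<Rightarrow> real" where
  "GFT P q = (\<integral>x. (if snd x \<le> max q (second_val (fst x)) \<and> q \<le> top_val (fst x)
                     then top_val (fst x) - snd x else 0) \<partial>P)"

definition grid_step :: "real multiset \<Rightarrow> nat \<Rightarrow> nat \<Rightarrow> real \<Rightarrow> real" where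
  "grid_step B T0 K p =
     (let C = {q \<in> set_mset B. real (size (filter_mset (\<lambda>b. p < b \<and> b < q) B)) \<le> real T0 / real K}
      in if C = {} then 1 else Max C)"

fun grid_pt :: "real multiset \<Rightarrow> nat \<Rightarrow> nat \<Rightarrow> nat \<Rightarrow> real" where
  "grid_pt B T0 K 0 = 0"
| "grid_pt B T0 K (Suc k) = grid_step B T0 K (grid_pt B T0 K k)"

definition buyer_grid :: "real multiset \<Rightarrow> nat \<Rightarrow> nat \<Rightarrow> real set" where
  "buyer_grid B T0 K = {0} \<union> {grid_pt B T0 K k | k. 1 \<le> k \<and> k \<le> K}"

definition sample_tops :: "(nat \<Rightarrow> (real^'n) \<times> real) \<Rightarrow> nat \<Rightarrow> real multiset" where
  "sample_tops \<omega> T0 = image_mset (\<lambda>t. top_val (fst (\<omega> t))) (mset_set {..<T0})"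

end

theory Submission
  imports Defs
begin

text \<open>Let q maximise GFT. Since gains from trade lie in [0,1], moving the price from q up to p
  loses at most the P-mass of top values in [q,p), and moving it down loses at most the mass of
  top values \<ge> q. At most T0/K sampled top values lie strictly between consecutive points of the
  adaptive grid, and its last point dominates all samples, so if q lies above the whole grid no
  sample is \<ge> q. Hence it suffices that, with probability 1 - \<delta>/2, every interval [q,c) of mass
  greater than t = 1/K + \<epsilon> contains more than T0/K samples. All these intervals contain [q,s],
  where s is the threshold at which the mass of [q,s) first exceeds t, and [q,s] itself has mass
  at least t; a single one-sided Hoeffding bound for [q,s] does the job.\<close>

section \<open>Largest and second largest buyer value\<close>

lemma top_val_ge: "b $ i \<le> top_val b"
  unfolding top_val_def by (rule Max_ge) auto

lemma top_val_in_range: "top_val b \<in> range (\<lambda>i. b $ i)"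
  unfolding top_val_def by (rule Max_in) auto

lemma borel_measurable_top_val [measurable]: "top_val \<in> borel_measurable borel"
  unfolding top_val_def by measurable

lemma sorted_list_of_multiset_second_largest_le_iff:
  fixes M :: "'a::linorder multiset"
  assumes "2 \<le> size M"
  shows "sorted_list_of_multiset M ! (size M - 2) \<le> a \<longleftrightarrow> size (filter_mset (\<lambda>x. a < x) M) \<le> 1"
proof -
  define xs where "xs = sorted_list_of_multiset M"
  have len: "length xs = size M"
    unfolding xs_def by (metis mset_sorted_list_of_multiset size_mset)
  obtain ys u v where xs: "xs = ys @ [u, v]"
    using len assms by (metis Suc_le_length_iff append.assoc append.left_neutral append_Cons
        list.distinct(1) numeral_2_eq_2 rev_exhaust)
  have "sorted xs"
    unfolding xs_def by simp
  then have ys_le: "\<forall>y\<in>set ys. y \<le> u" and "u \<le> v"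
    unfolding xs by (auto simp: sorted_append)
  have "size (filter_mset (\<lambda>x. a < x) M) = length (filter (\<lambda>x. a < x) xs)"
    unfolding xs_def by (metis mset_filter mset_sorted_list_of_multiset size_mset)
  also have "\<dots> = length (filter (\<lambda>x. a < x) ys) + length (filter (\<lambda>x. a < x) [u, v])"
    unfolding xs by simp
  finally have count: "size (filter_mset (\<lambda>x. a < x) M) = \<dots>" .
  have "size M - 2 = length ys"
    using len unfolding xs by simp
  then have second: "sorted_list_of_multiset M ! (size M - 2) = u"
    unfolding xs_def[symmetric] xs by (simp add: nth_append)
  show ?thesis
  proof (cases "u \<le> a")
    case True
    then have "filter (\<lambda>x. a < x) ys = []"
      using ys_le by (auto simp: filter_empty_conv)
    then show ?thesis
      using True unfolding second count by simp
  next
    case False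
    then have "a < u" "a < v"
      using \<open>u \<le> v\<close> by (simp_all add: not_le less_le_trans)
    then show ?thesis
      unfolding second count by simp
  qed
qed

lemma second_val_le_iff:
  assumes "CARD('n) \<ge> 2"
  shows "second_val (b::real^'n) \<le> a \<longleftrightarrow> card {i. a < b $ i} \<le> 1"
proof -
  define M where "M = image_mset (\<lambda>i. b $ i) (mset_set (UNIV::'n set))"
  have "size M = CARD('n)" and "size (filter_mset (\<lambda>x. a < x) M) = card {i. a < b $ i}"
    unfolding M_def by (simp_all add: filter_mset_image_mset)
  moreover have "second_val b = sorted_list_of_multiset M ! (size M - 2)"
    unfolding second_val_def M_def[symmetric] Let_def
    by (metis mset_sorted_list_of_multiset size_mset)
  ultimately show ?thesis
    using sorted_list_of_multiset_second_largest_le_iff[of M a] assms by simp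
qed

lemma second_val_le_top_val:
  assumes "CARD('n) \<ge> 2"
  shows "second_val (b::real^'n) \<le> top_val b"
proof -
  have "{i. top_val b < b $ i} = {}"
    using top_val_ge[of b] by (auto simp: not_less)
  then show ?thesis
    by (simp add: second_val_le_iff[OF assms])
qed

lemma card_exceeding_le_one_iff:
  "card {i. a < (b::real^'n) $ i} \<le> 1 \<longleftrightarrow> (\<forall>i j. i \<noteq> j \<longrightarrow> b $ i \<le> a \<or> b $ j \<le> a)"
proof -
  have "card {i. a < b $ i} \<le> Suc 0 \<longleftrightarrow> (\<forall>i\<in>{i. a < b $ i}. \<forall>j\<in>{i. a < b $ i}. i = j)"
    by (rule card_le_Suc0_iff_eq) simp
  then show ?thesis
    by (metis One_nat_def mem_Collect_eq not_le)
qed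

lemma borel_measurable_second_val:
  assumes "CARD('n) \<ge> 2"
  shows "(second_val :: real^'n \<Rightarrow> real) \<in> borel_measurable borel"
proof (rule borel_measurableI_le)
  fix a
  have "{b. second_val (b::real^'n) \<le> a} = (\<Inter>i. \<Inter>j\<in>-{i}. {b. b $ i \<le> a \<or> b $ j \<le> a})"
    unfolding second_val_le_iff[OF assms] card_exceeding_le_one_iff by blast
  also have "\<dots> \<in> sets borel"
    by (intro borel_closed closed_INT ballI closed_Collect_disj closed_Collect_le continuous_intros)
  finally show "{b \<in> space borel. second_val (b::real^'n) \<le> a} \<in> sets borel"
    by simp
qed

section \<open>Gains from trade at a posted price\<close>

definition gft_gain :: "real \<Rightarrow> (real^'n) \<times> real \<Rightarrow> real" where
  "gft_gain q x = (if snd x \<le> max q (second_val (fst x)) \<and> q \<le> top_val (fst x)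
                   then top_val (fst x) - snd x else 0)"

lemma GFT_eq_integral: "GFT P q = (\<integral>x. gft_gain q x \<partial>P)"
  unfolding GFT_def gft_gain_def ..

locale bilateral_trade = prob_space P
  for P :: "((real^'n) \<times> real) measure" +
  assumes card_ge_2: "CARD('n) \<ge> 2"
    and sets_P [measurable_cong]: "sets P = sets borel"
    and AE_unit_values: "AE x in P. (\<forall>i. fst x $ i \<in> {0..1}) \<and> snd x \<in> {0..1}"
begin

lemma space_P: "space P = UNIV"
  using sets_eq_imp_space_eq[OF sets_P] by simp

lemma measurable_fst_P [measurable]: "fst \<in> P \<rightarrow>\<^sub>M borel"
  unfolding measurable_cong_sets[OF sets_P refl] borel_prod[symmetric] by simp

lemma measurable_snd_P [measurable]: "snd \<in> P \<rightarrow>\<^sub>M borel"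
  unfolding measurable_cong_sets[OF sets_P refl] borel_prod[symmetric] by simp

lemma borel_measurable_gft_gain [measurable]: "gft_gain q \<in> borel_measurable P"
  using borel_measurable_second_val[OF card_ge_2] unfolding gft_gain_def by measurable

lemma AE_top_val_unit: "AE x in P. top_val (fst x) \<in> {0..1} \<and> snd x \<in> {0..1}"
  using AE_unit_values by eventually_elim (metis rangeE top_val_in_range)

lemma integrable_gft_gain: "integrable P (gft_gain q)"
proof (rule integrable_const_bound[where B=1])
  show "AE x in P. norm (gft_gain q x) \<le> 1"
    using AE_top_val_unit by eventually_elim (auto simp: gft_gain_def)
qed simp

lemma GFT_diff_le_measure:
  assumes "A \<in> sets P" and "AE x in P. gft_gain q x - gft_gain p x \<le> indicator A x"
  shows "GFT P q - GFT P p \<le> measure P A"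
proof -
  have "GFT P q - GFT P p = (\<integral>x. gft_gain q x - gft_gain p x \<partial>P)"
    unfolding GFT_eq_integral by (simp add: integrable_gft_gain)
  also have "\<dots> \<le> (\<integral>x. indicator A x \<partial>P)"
    using assms
    by (intro integral_mono_AE integrable_gft_gain Bochner_Integration.integrable_diff
        integrable_real_indicator) (auto simp: less_top[symmetric])
  also have "\<dots> = measure P A"
    using assms(1) by simp
  finally show ?thesis .
qed

lemma GFT_diff_le_below:
  assumes "q \<le> p"
  shows "GFT P q - GFT P p \<le> measure P {x \<in> space P. q \<le> top_val (fst x) \<and> top_val (fst x) < p}"
proof (rule GFT_diff_le_measure)
  show "AE x in P. gft_gain q x - gft_gain p x
      \<le> indicator {x \<in> space P. q \<le> top_val (fst x) \<and> top_val (fst x) < p} x"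
    using AE_top_val_unit by eventually_elim (use assms in \<open>auto simp: gft_gain_def space_P\<close>)
qed measurable

lemma GFT_diff_le_above:
  assumes "p \<le> q" and "1 < c"
  shows "GFT P q - GFT P p \<le> measure P {x \<in> space P. q \<le> top_val (fst x) \<and> top_val (fst x) < c}"
proof (rule GFT_diff_le_measure)
  show "AE x in P. gft_gain q x - gft_gain p x
      \<le> indicator {x \<in> space P. q \<le> top_val (fst x) \<and> top_val (fst x) < c} x"
    using AE_top_val_unit
  proof eventually_elim
    case (elim x)
    then show ?case
      using assms second_val_le_top_val[OF card_ge_2, of "fst x"]
      by (auto simp: gft_gain_def space_P)
  qed
qed measurable

end

section \<open>Concentration of sample counts in intervals\<close>

context finite_borel_measure
begin

lemma bdd_below_measure_lessThan_gt:
  assumes "0 < t"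
  shows "bdd_below {c. t < measure M {..<c}}"
proof -
  have "\<forall>\<^sub>F x in at_bot. cdf M x < t"
    by (rule order_tendstoD(2)[OF cdf_lim_at_bot assms])
  then obtain b where b: "\<And>x. x \<le> b \<Longrightarrow> cdf M x < t"
    unfolding eventually_at_bot_linorder by blast
  have "b \<le> c" if "t < measure M {..<c}" for c
  proof (rule ccontr)
    assume "\<not> b \<le> c"
    moreover have "measure M {..<c} \<le> cdf M c"
      unfolding cdf_def by (intro finite_measure_mono) auto
    ultimately show False
      using that b[of c] by simp
  qed
  then show ?thesis
    by (intro bdd_belowI[of _ b]) simp
qed

lemma cdf_Inf_measure_lessThan_gt:
  assumes "0 < t" and "t < measure M {..<c0}"
  shows "t \<le> cdf M (Inf {c. t < measure M {..<c}})"
proof -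
  let ?s = "Inf {c. t < measure M {..<c}}"
  have above: "t < cdf M y" if "?s < y" for y
  proof -
    have "{c. t < measure M {..<c}} \<noteq> {}"
      using assms(2) by blast
    from cInf_lessD[OF this \<open>?s < y\<close>]
    obtain a where "t < measure M {..<a}" "a < y"
      by blast
    moreover have "measure M {..<a} \<le> cdf M y"
      unfolding cdf_def using \<open>a < y\<close> by (intro finite_measure_mono) auto
    ultimately show ?thesis
      by simp
  qed
  have "\<forall>\<^sub>F y in at_right ?s. t \<le> cdf M y"
    using eventually_at_right_less[of ?s] by eventually_elim (intro less_imp_le above)
  then show ?thesis
    using cdf_is_right_cont[of ?s] unfolding continuous_within
    by (intro tendsto_lowerbound) auto
qed

lemma Inf_measure_lessThan_gt_less:
  assumes "0 < t" and "t < measure M {..<c}"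
  shows "Inf {c. t < measure M {..<c}} < c"
proof -
  have "\<forall>\<^sub>F y in at_left c. t < cdf M y"
    using assms(2) by (rule order_tendstoD(1)[OF cdf_at_left])
  then obtain b where "b < c" and b: "\<And>y. b < y \<Longrightarrow> y < c \<Longrightarrow> t < cdf M y"
    using eventually_at_left[of "c - 1" c] by auto
  define y where "y = (b + c) / 2"
  have "y < c" "t < cdf M y"
    using \<open>b < c\<close> b[of y] unfolding y_def by simp_all
  moreover have "cdf M y \<le> measure M {..<(y + c) / 2}"
    unfolding cdf_def using \<open>y < c\<close> by (intro finite_measure_mono) auto
  ultimately have "Inf {c. t < measure M {..<c}} \<le> (y + c) / 2"
    using bdd_below_measure_lessThan_gt[OF assms(1)] by (intro cInf_lower) simp_all
  then show ?thesis
    using \<open>y < c\<close> by simp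
qed

end

lemma indep_vars_PiM_components:
  assumes "I \<noteq> {}" and "\<And>i. i \<in> I \<Longrightarrow> prob_space (M i)"
  shows "prob_space.indep_vars (PiM I M) M (\<lambda>i \<omega>. \<omega> i) I"
proof -
  interpret prob_space "PiM I M"
    using assms(2) by (rule prob_space_PiM)
  have "distr (PiM I M) (PiM I M) (\<lambda>\<omega>. \<lambda>i\<in>I. \<omega> i) = distr (PiM I M) (PiM I M) (\<lambda>\<omega>. \<omega>)"
    by (intro distr_cong) (auto simp: space_PiM)
  also have "\<dots> = PiM I (\<lambda>i. distr (PiM I M) (M i) (\<lambda>\<omega>. \<omega> i))"
    using assms(2) by (simp add: distr_PiM_component cong: PiM_cong)
  finally show ?thesis
    using assms(1) by (subst indep_vars_iff_distr_eq_PiM') auto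
qed

lemma Hoeffding_count_lower:
  assumes P: "prob_space P" and S: "S \<in> sets P" and "0 \<le> \<epsilon>" and "0 < n"
  shows "\<exists>E \<in> sets (PiM {..<n} (\<lambda>_. P)).
           1 - exp (- 2 * real n * \<epsilon>\<^sup>2) \<le> measure (PiM {..<n} (\<lambda>_. P)) E \<and>
           (\<forall>\<omega>\<in>E. real n * (measure P S - \<epsilon>) < real (card {i \<in> {..<n}. \<omega> i \<in> S}))"
proof -
  define M where "M = PiM {..<n} (\<lambda>_. P)"
  define X where "X i \<omega> = (indicator S (\<omega> i) :: real)" for i and \<omega> :: "nat \<Rightarrow> _"
  interpret M: prob_space M
    unfolding M_def using P by (rule prob_space_PiM)
  have component: "(\<lambda>\<omega>. \<omega> i) \<in> M \<rightarrow>\<^sub>M P" if "i < n" for i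
    unfolding M_def using that by (intro measurable_component_singleton) auto
  have "M.indep_vars (\<lambda>_. P) (\<lambda>i \<omega>. \<omega> i) {..<n}"
    unfolding M_def using P \<open>0 < n\<close> by (intro indep_vars_PiM_components) auto
  then have indep: "M.indep_vars (\<lambda>_. borel) X {..<n}"
    unfolding X_def by (rule M.indep_vars_compose2) (use S in simp)
  have expectation: "M.expectation (X i) = measure P S" if "i < n" for i
  proof -
    have "M.expectation (X i) = (\<integral>x. indicator S x \<partial>distr M P (\<lambda>\<omega>. \<omega> i))"
      unfolding X_def using component[OF that] S by (intro integral_distr[symmetric]) auto
    also have "distr M P (\<lambda>\<omega>. \<omega> i) = P"
      unfolding M_def using P that by (intro distr_PiM_component) auto
    finally show ?thesis
      using S by simp
  qed
  interpret Hoeffding_ineq M "{..<n}" X "\<lambda>_. 0" "\<lambda>_. 1" "\<Sum>i<n. M.expectation (X i)"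
    by unfold_locales (auto simp: indep X_def)
  define bad where "bad = {\<omega> \<in> space M. (\<Sum>i<n. X i \<omega>) \<le> (\<Sum>i<n. M.expectation (X i)) - real n * \<epsilon>}"
  have bad_sets: "bad \<in> M.events"
    unfolding bad_def X_def M_def using S by measurable
  have "M.prob bad \<le> exp (- 2 * (real n * \<epsilon>)\<^sup>2 / real n)"
    using Hoeffding_ineq_le[of "real n * \<epsilon>"] \<open>0 \<le> \<epsilon>\<close> \<open>0 < n\<close> unfolding bad_def by simp
  also have "\<dots> = exp (- 2 * real n * \<epsilon>\<^sup>2)"
    using \<open>0 < n\<close> by (simp add: power2_eq_square)
  finally have prob_bad: "M.prob bad \<le> exp (- 2 * real n * \<epsilon>\<^sup>2)" .
  show ?thesis
  proof (intro bexI[of _ "space M - bad"] conjI ballI)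
    show "space M - bad \<in> sets (PiM {..<n} (\<lambda>_. P))"
      using bad_sets unfolding M_def by auto
    show "1 - exp (- 2 * real n * \<epsilon>\<^sup>2) \<le> measure (PiM {..<n} (\<lambda>_. P)) (space M - bad)"
      using M.prob_compl[OF bad_sets] prob_bad unfolding M_def by simp
  next
    fix \<omega> assume "\<omega> \<in> space M - bad"
    then have "real n * (measure P S - \<epsilon>) < (\<Sum>i<n. X i \<omega>)"
      unfolding bad_def using expectation by (auto simp: algebra_simps)
    also have "(\<Sum>i<n. X i \<omega>) = real (card {i \<in> {..<n}. \<omega> i \<in> S})"
      unfolding X_def indicator_def by (simp add: sum.If_cases Int_def)
    finally show "real n * (measure P S - \<epsilon>) < real (card {i \<in> {..<n}. \<omega> i \<in> S})" .
  qed
qed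

lemma (in prob_space) prob_interval_eq_distr_diff:
  fixes Y :: "'a \<Rightarrow> real"
  assumes [measurable]: "Y \<in> borel_measurable M" and "q \<le> c"
  shows "prob {x \<in> space M. q \<le> Y x \<and> Y x < c}
       = measure (distr M borel Y) {..<c} - measure (distr M borel Y) {..<q}"
proof -
  have lessThan: "measure (distr M borel Y) {..<a} = prob {x \<in> space M. Y x < a}" for a
    by (simp add: measure_distr vimage_def Int_def conj_commute)
  have "{x \<in> space M. Y x < c} = {x \<in> space M. Y x < q} \<union> {x \<in> space M. q \<le> Y x \<and> Y x < c}"
    using \<open>q \<le> c\<close> by auto
  then have "prob {x \<in> space M. Y x < c}
      = prob {x \<in> space M. Y x < q} + prob {x \<in> space M. q \<le> Y x \<and> Y x < c}"
    by (subst finite_measure_Union[symmetric]) auto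
  then show ?thesis
    unfolding lessThan by simp
qed

lemma (in prob_space) critical_interval_exists:
  fixes Y :: "'a \<Rightarrow> real"
  assumes [measurable]: "Y \<in> borel_measurable M" and "0 < t"
    and "t < prob {x \<in> space M. q \<le> Y x \<and> Y x < c0}"
  obtains s where "t \<le> prob {x \<in> space M. q \<le> Y x \<and> Y x \<le> s}"
    and "\<And>c. t < prob {x \<in> space M. q \<le> Y x \<and> Y x < c} \<Longrightarrow> s < c"
proof -
  define N where "N = distr M borel Y"
  interpret N: real_distribution N
    unfolding N_def by simp
  have lessThan: "measure N {..<a} = prob {x \<in> space M. Y x < a}" for a
    unfolding N_def by (simp add: measure_distr vimage_def Int_def conj_commute)
  have shifted: "t + measure N {..<q} < measure N {..<c}"
    if "t < prob {x \<in> space M. q \<le> Y x \<and> Y x < c}" for c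
  proof -
    have "q \<le> c"
    proof (rule ccontr)
      assume "\<not> q \<le> c"
      then have "{x \<in> space M. q \<le> Y x \<and> Y x < c} = {}"
        by auto
      then have "prob {x \<in> space M. q \<le> Y x \<and> Y x < c} = 0"
        by (simp only: measure_empty)
      then show False
        using that \<open>0 < t\<close> by linarith
    qed
    then show ?thesis
      using that prob_interval_eq_distr_diff[of Y q c] unfolding N_def by simp
  qed
  define s where "s = Inf {c. t + measure N {..<q} < measure N {..<c}}"
  have pos: "0 < t + measure N {..<q}"
    using \<open>0 < t\<close> by (simp add: add_pos_nonneg)
  have "t + measure N {..<q} \<le> prob {x \<in> space M. Y x \<le> s}"
    using N.cdf_Inf_measure_lessThan_gt[OF pos shifted[OF assms(3)], folded s_def] unfolding cdf_def N_def by (simp add: measure_distr vimage_def Int_def conj_commute)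
  also have "\<dots> \<le> prob ({x \<in> space M. Y x < q} \<union> {x \<in> space M. q \<le> Y x \<and> Y x \<le> s})"
    by (intro finite_measure_mono) auto
  also have "\<dots> \<le> measure N {..<q} + prob {x \<in> space M. q \<le> Y x \<and> Y x \<le> s}"
    unfolding lessThan by (intro measure_subadditive) auto
  finally show ?thesis
    using that N.Inf_measure_lessThan_gt_less[OF pos shifted, folded s_def] by simp
qed

lemma (in prob_space) Hoeffding_count_lower_intervals:
  fixes Y :: "'a \<Rightarrow> real"
  assumes Y [measurable]: "Y \<in> borel_measurable M" and "0 < t" and "0 \<le> \<epsilon>" and "0 < n"
  shows "\<exists>E \<in> sets (PiM {..<n} (\<lambda>_. M)).
           1 - exp (- 2 * real n * \<epsilon>\<^sup>2) \<le> measure (PiM {..<n} (\<lambda>_. M)) E \<and>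
           (\<forall>\<omega>\<in>E. \<forall>c. t < prob {x \<in> space M. q \<le> Y x \<and> Y x < c} \<longrightarrow>
              real n * (t - \<epsilon>) < real (card {i \<in> {..<n}. q \<le> Y (\<omega> i) \<and> Y (\<omega> i) < c}))"
proof (cases "\<exists>c. t < prob {x \<in> space M. q \<le> Y x \<and> Y x < c}")
  case False
  interpret Pi: prob_space "PiM {..<n} (\<lambda>_. M)"
    by (rule prob_space_PiM) (rule prob_space_axioms)
  show ?thesis
    using False by (intro bexI[of _ "space (PiM {..<n} (\<lambda>_. M))"]) (auto simp: Pi.prob_space)
next
  case True
  then obtain s where prob_S: "t \<le> prob {x \<in> space M. q \<le> Y x \<and> Y x \<le> s}"
    and s_less: "\<And>c. t < prob {x \<in> space M. q \<le> Y x \<and> Y x < c} \<Longrightarrow> s < c"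
    using critical_interval_exists[OF Y \<open>0 < t\<close>] by blast
  define S where "S = {x \<in> space M. q \<le> Y x \<and> Y x \<le> s}"
  obtain E where E: "E \<in> sets (PiM {..<n} (\<lambda>_. M))"
      "1 - exp (- 2 * real n * \<epsilon>\<^sup>2) \<le> measure (PiM {..<n} (\<lambda>_. M)) E"
      "\<And>\<omega>. \<omega> \<in> E \<Longrightarrow> real n * (prob S - \<epsilon>) < real (card {i \<in> {..<n}. \<omega> i \<in> S})"
    using Hoeffding_count_lower[OF prob_space_axioms _ \<open>0 \<le> \<epsilon>\<close> \<open>0 < n\<close>, of S]
    unfolding S_def by auto
  show ?thesis
  proof (intro bexI[OF _ E(1)] conjI ballI allI impI)
    fix \<omega> c assume "\<omega> \<in> E" and c: "t < prob {x \<in> space M. q \<le> Y x \<and> Y x < c}"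
    have "real n * (t - \<epsilon>) \<le> real n * (prob S - \<epsilon>)"
      using prob_S unfolding S_def by (intro mult_left_mono) auto
    also have "\<dots> < real (card {i \<in> {..<n}. \<omega> i \<in> S})"
      by (rule E(3)[OF \<open>\<omega> \<in> E\<close>])
    also have "\<dots> \<le> real (card {i \<in> {..<n}. q \<le> Y (\<omega> i) \<and> Y (\<omega> i) < c})"
      using s_less[OF c] unfolding S_def by (intro of_nat_mono card_mono) auto
    finally show "real n * (t - \<epsilon>) < real (card {i \<in> {..<n}. q \<le> Y (\<omega> i) \<and> Y (\<omega> i) < c})" .
  qed (use E(2) in simp)
qed

section \<open>The adaptive buyer grid\<close>

lemma size_filter_mset_Ioc_split:
  fixes a b c :: "'a::linorder"
  assumes "a \<le> b" and "b \<le> c"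
  shows "size (filter_mset (\<lambda>x. a < x \<and> x \<le> c) B)
       = size (filter_mset (\<lambda>x. a < x \<and> x \<le> b) B) + size (filter_mset (\<lambda>x. b < x \<and> x \<le> c) B)"
proof -
  have "filter_mset (\<lambda>x. a < x \<and> x \<le> c) B
      = filter_mset (\<lambda>x. a < x \<and> x \<le> b) B + filter_mset (\<lambda>x. b < x \<and> x \<le> c) B"
    using assms by (induction B) auto
  then show ?thesis
    by simp
qed

lemma real_le_divide_iff_le_div:
  assumes "0 < K"
  shows "real m \<le> real n / real K \<longleftrightarrow> m \<le> n div K"
proof -
  have "real m \<le> real n / real K \<longleftrightarrow> m * K \<le> n"
    using assms by (simp add: pos_le_divide_eq flip: of_nat_mult)
  also have "\<dots> \<longleftrightarrow> m \<le> n div K"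
    using assms by (simp add: less_eq_div_iff_mult_less_eq)
  finally show ?thesis .
qed

context
  fixes B :: "real multiset" and T0 K :: nat
  assumes B_nonempty: "B \<noteq> {#}"
begin

private definition step_candidates :: "real \<Rightarrow> real set" where
  "step_candidates p =
     {q \<in> set_mset B. real (size (filter_mset (\<lambda>b. p < b \<and> b < q) B)) \<le> real T0 / real K}"

private lemma step_candidates:
  "finite (step_candidates p)" "step_candidates p \<noteq> {}"
  "grid_step B T0 K p = Max (step_candidates p)"
proof -
  show "finite (step_candidates p)"
    unfolding step_candidates_def by auto
  have none_below: "filter_mset (\<lambda>b. p < b \<and> b < Min (set_mset B)) B = {#}"
    by (auto simp: filter_mset_eq_mempty_iff not_less)
  have "Min (set_mset B) \<in> step_candidates p"
    using B_nonempty unfolding step_candidates_def mem_Collect_eq none_below by simp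
  then show "step_candidates p \<noteq> {}"
    by auto
  then show "grid_step B T0 K p = Max (step_candidates p)"
    unfolding grid_step_def Let_def by (fold step_candidates_def) simp
qed

lemma count_below_grid_step:
  "real (size (filter_mset (\<lambda>b. p < b \<and> b < grid_step B T0 K p) B)) \<le> real T0 / real K"
  using Max_in[OF step_candidates(1,2), of p] unfolding step_candidates(3)
  by (simp add: step_candidates_def)

lemma le_grid_step:
  assumes "q \<in># B" and "real (size (filter_mset (\<lambda>b. p < b \<and> b < q) B)) \<le> real T0 / real K"
  shows "q \<le> grid_step B T0 K p"
  unfolding step_candidates(3) using assms step_candidates(1)
  by (intro Max_ge) (auto simp: step_candidates_def)

lemma Max_le_grid_step:
  assumes "Max (set_mset B) \<le> p"
  shows "Max (set_mset B) \<le> grid_step B T0 K p"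
proof (rule le_grid_step)
  show "Max (set_mset B) \<in># B"
    using B_nonempty by (intro Max_in) auto
  have none_between: "filter_mset (\<lambda>b. p < b \<and> b < Max (set_mset B)) B = {#}"
    using assms by (auto simp: filter_mset_eq_mempty_iff)
  show "real (size (filter_mset (\<lambda>b. p < b \<and> b < Max (set_mset B)) B)) \<le> real T0 / real K"
    unfolding none_between by simp
qed

lemma grid_step_progress:
  assumes "0 < K" and below_Max: "grid_step B T0 K p < Max (set_mset B)"
  shows "p < grid_step B T0 K p"
    and "T0 div K + 1 \<le> size (filter_mset (\<lambda>b. p < b \<and> b \<le> grid_step B T0 K p) B)"
proof -
  let ?p' = "grid_step B T0 K p"
  define A where "A = {x \<in> set_mset B. ?p' < x}"
  have "finite A" "Max (set_mset B) \<in> A"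
    using B_nonempty below_Max unfolding A_def by auto
  define q where "q = Min A"
  have "q \<in> A"
    unfolding q_def using \<open>finite A\<close> \<open>Max (set_mset B) \<in> A\<close> by (intro Min_in) auto
  then have q: "q \<in># B" "?p' < q"
    unfolding A_def by auto
  have q_min: "q \<le> x" if "x \<in># B" "?p' < x" for x
    using \<open>finite A\<close> that unfolding q_def A_def by (intro Min_le) auto
  have "\<not> real (size (filter_mset (\<lambda>b. p < b \<and> b < q) B)) \<le> real T0 / real K"
    using le_grid_step[OF q(1)] q(2) by fastforce
  then have "T0 div K + 1 \<le> size (filter_mset (\<lambda>b. p < b \<and> b < q) B)"
    using real_le_divide_iff_le_div[OF \<open>0 < K\<close>] by simp
  also have "filter_mset (\<lambda>b. p < b \<and> b < q) B = filter_mset (\<lambda>b. p < b \<and> b \<le> ?p') B"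
    using q q_min by (intro filter_mset_cong) force+
  finally show count: "T0 div K + 1 \<le> size (filter_mset (\<lambda>b. p < b \<and> b \<le> ?p') B)" .
  then have "size (filter_mset (\<lambda>b. p < b \<and> b \<le> ?p') B) \<noteq> 0"
    by linarith
  then have "filter_mset (\<lambda>b. p < b \<and> b \<le> ?p') B \<noteq> {#}"
    by (simp only: size_eq_0_iff_empty not_False_eq_True)
  then obtain x where "x \<in># filter_mset (\<lambda>b. p < b \<and> b \<le> ?p') B"
    by (rule multiset_nonemptyE)
  then show "p < ?p'"
    by auto
qed

lemma grid_pt_reaches_Max_or_counts:
  assumes "0 < K"
  shows "Max (set_mset B) \<le> grid_pt B T0 K j \<or> 0 \<le> grid_pt B T0 K j \<and>
           j * (T0 div K + 1) \<le> size (filter_mset (\<lambda>b. 0 < b \<and> b \<le> grid_pt B T0 K j) B)"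
proof (induction j)
  case (Suc j)
  let ?M = "Max (set_mset B)"
  let ?count = "\<lambda>p. size (filter_mset (\<lambda>b. 0 < b \<and> b \<le> p) B)"
  let ?p = "grid_pt B T0 K j"
  let ?p' = "grid_step B T0 K ?p"
  consider "?M \<le> ?p" | "?M \<le> ?p'" | "?p' < ?M" "0 \<le> ?p" "j * (T0 div K + 1) \<le> ?count ?p"
    using Suc.IH by fastforce
  then show ?case
  proof cases
    case 1
    then show ?thesis
      by (simp add: Max_le_grid_step)
  next
    case 3
    note progress = grid_step_progress[OF \<open>0 < K\<close> 3(1)]
    have "?count ?p' = ?count ?p + size (filter_mset (\<lambda>b. ?p < b \<and> b \<le> ?p') B)"
      by (rule size_filter_mset_Ioc_split[OF 3(2) less_imp_le[OF progress(1)]])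
    then show ?thesis
      using 3(2,3) progress by simp
  qed simp
qed simp

lemma Max_le_grid_pt:
  assumes "0 < K" and "size B \<le> T0"
  shows "Max (set_mset B) \<le> grid_pt B T0 K K"
proof (rule ccontr)
  assume "\<not> Max (set_mset B) \<le> grid_pt B T0 K K"
  then have "K * (T0 div K + 1) \<le> size (filter_mset (\<lambda>b. 0 < b \<and> b \<le> grid_pt B T0 K K) B)"
    using grid_pt_reaches_Max_or_counts[OF \<open>0 < K\<close>, of K] by simp
  also have "\<dots> \<le> T0"
    using size_filter_mset_lesseq[of _ B] assms(2) by (meson order_trans)
  also have "T0 < K * (T0 div K + 1)"
    using \<open>0 < K\<close> by (metis add.commute div_mult_mod_eq distrib_left mod_less_divisor
        mult.commute mult.right_neutral nat_add_left_cancel_less)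
  finally show False
    by simp
qed

lemma count_between_grid_pts:
  assumes "grid_pt B T0 K k < q"
  shows "real (size (filter_mset (\<lambda>b. q \<le> b \<and> b < grid_pt B T0 K (Suc k)) B)) \<le> real T0 / real K"
proof -
  have "size (filter_mset (\<lambda>b. q \<le> b \<and> b < grid_pt B T0 K (Suc k)) B)
      \<le> size (filter_mset (\<lambda>b. grid_pt B T0 K k < b \<and> b < grid_pt B T0 K (Suc k)) B)"
    using assms by (intro size_mset_mono filter_mset_mono_strong) auto
  then show ?thesis
    using count_below_grid_step[of "grid_pt B T0 K k"] by simp
qed

lemma no_sample_above_grid:
  assumes "0 < K" and "size B \<le> T0" and "grid_pt B T0 K K < q"
  shows "filter_mset (\<lambda>b. q \<le> b \<and> b < c) B = {#}"
proof -
  have "Max (set_mset B) < q"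
    using Max_le_grid_pt[OF assms(1,2)] assms(3) by simp
  then show ?thesis
    by (auto simp: filter_mset_eq_mempty_iff not_le dest!: Max_ge[OF finite_set_mset])
qed

end

lemma size_filter_sample_tops:
  "size (filter_mset Q (sample_tops \<omega> T0)) = card {i \<in> {..<T0}. Q (top_val (fst (\<omega> i)))}"
  unfolding sample_tops_def by (simp add: filter_mset_image_mset)

lemma finite_buyer_grid: "finite (buyer_grid B T0 K)"
proof -
  have "buyer_grid B T0 K \<subseteq> insert 0 (grid_pt B T0 K ` {1..K})"
    unfolding buyer_grid_def by auto
  then show ?thesis
    by (rule finite_subset) simp
qed

lemma grid_pt_in_buyer_grid: "1 \<le> k \<Longrightarrow> k \<le> K \<Longrightarrow> grid_pt B T0 K k \<in> buyer_grid B T0 K"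
  unfolding buyer_grid_def by blast

section \<open>Grid approximation of the optimal price\<close>

lemma crossing_or_below:
  fixes f :: "nat \<Rightarrow> 'a::linorder"
  assumes "f 0 < q"
  shows "(\<exists>k<n. f k < q \<and> q \<le> f (Suc k)) \<or> f n < q"
  using assms by (induction n) (auto simp: less_Suc_eq not_less)

context bilateral_trade
begin

lemma GFT_buyer_grid_approximation:
  assumes "0 \<le> q" and "0 \<le> t" and "0 < K" and "0 < T0"
    and sample_mass: "\<And>c. t < prob {x \<in> space P. q \<le> top_val (fst x) \<and> top_val (fst x) < c} \<Longrightarrow>
      real T0 / real K < real (card {i \<in> {..<T0}. q \<le> top_val (fst (\<omega> i)) \<and> top_val (fst (\<omega> i)) < c})"
  shows "\<exists>p \<in> buyer_grid (sample_tops \<omega> T0) T0 K. GFT P q - GFT P p \<le> t"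
proof -
  define B where "B = sample_tops \<omega> T0"
  have "size B = T0"
    unfolding B_def sample_tops_def by simp
  then have "B \<noteq> {#}"
    using \<open>0 < T0\<close> by auto
  have mass_le: "prob {x \<in> space P. q \<le> top_val (fst x) \<and> top_val (fst x) < c} \<le> t"
    if "real (size (filter_mset (\<lambda>b. q \<le> b \<and> b < c) B)) \<le> real T0 / real K" for c
    using sample_mass[of c] that unfolding B_def size_filter_sample_tops by fastforce
  show ?thesis
  proof (cases "q = 0")
    case True
    then show ?thesis
      using \<open>0 \<le> t\<close> unfolding buyer_grid_def by auto
  next
    case False
    then have "grid_pt B T0 K 0 < q"
      using \<open>0 \<le> q\<close> by simp
    then consider k where "k < K" "grid_pt B T0 K k < q" "q \<le> grid_pt B T0 K (Suc k)"
      | "grid_pt B T0 K K < q"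
      using crossing_or_below by blast
    then show ?thesis
    proof cases
      case (1 k)
      have "GFT P q - GFT P (grid_pt B T0 K (Suc k))
          \<le> prob {x \<in> space P. q \<le> top_val (fst x) \<and> top_val (fst x) < grid_pt B T0 K (Suc k)}"
        using 1(3) by (rule GFT_diff_le_below)
      also have "\<dots> \<le> t"
        using count_between_grid_pts[OF \<open>B \<noteq> {#}\<close> 1(2)] by (rule mass_le)
      finally show ?thesis
        using 1(1) grid_pt_in_buyer_grid[of "Suc k" K] unfolding B_def by auto
    next
      case 2
      have none_above: "filter_mset (\<lambda>b. q \<le> b \<and> b < 2) B = {#}"
        by (rule no_sample_above_grid[OF \<open>B \<noteq> {#}\<close> \<open>0 < K\<close> _ 2]) (simp add: \<open>size B = T0\<close>)
      have "GFT P q - GFT P (grid_pt B T0 K K)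
          \<le> prob {x \<in> space P. q \<le> top_val (fst x) \<and> top_val (fst x) < 2}"
        using 2 by (intro GFT_diff_le_above) auto
      also have "\<dots> \<le> t"
        using mass_le[of 2] unfolding none_above by simp
      finally show ?thesis
        using \<open>0 < K\<close> grid_pt_in_buyer_grid[of K K] unfolding B_def by auto
    qed
  qed
qed

end

theorem lemma3:
  fixes P :: "((real^'n) \<times> real) measure"
    and T0 K :: nat and \<delta> :: real
  assumes n2: "CARD('n) \<ge> 2"
    and prob: "prob_space P"
    and sets_P: "sets P = sets borel"
    and supp: "AE x in P. (\<forall>i. fst x $ i \<in> {0..1}) \<and> snd x \<in> {0..1}"
    and attained: "\<exists>q\<in>{0..1}. \<forall>q'\<in>{0..1}. GFT P q' \<le> GFT P q"
    and T0: "T0 \<ge> 1" and K: "K \<ge> 1"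
    and \<delta>: "0 < \<delta>" "\<delta> < 1"
  shows "\<exists>E \<in> sets (PiM {..<T0} (\<lambda>_. P)).
           measure (PiM {..<T0} (\<lambda>_. P)) E \<ge> 1 - \<delta> \<and>
           (\<forall>\<omega>\<in>E. (SUP q\<in>{0..1}. GFT P q)
                     - Max (GFT P ` buyer_grid (sample_tops \<omega> T0) T0 K)
                   \<le> 1 / real K + sqrt (ln (2 / \<delta>) / (2 * real T0)))"
proof -
  interpret bilateral_trade P
    using prob n2 sets_P supp by (simp add: bilateral_trade_def bilateral_trade_axioms_def)
  obtain q where q: "q \<in> {0..1}" "\<And>q'. q' \<in> {0..1} \<Longrightarrow> GFT P q' \<le> GFT P q"
    using attained by blast
  have SUP_eq: "(SUP q\<in>{0..1}. GFT P q) = GFT P q"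
    using q by (intro cSup_eq_maximum) auto
  define \<epsilon> where "\<epsilon> = sqrt (ln (2 / \<delta>) / (2 * real T0))"
  have "0 < ln (2 / \<delta>)"
    using \<delta> by simp
  then have "0 \<le> \<epsilon>" and confidence: "exp (- 2 * real T0 * \<epsilon>\<^sup>2) = \<delta> / 2"
    using \<delta> T0 by (simp_all add: \<epsilon>_def exp_minus field_simps)
  obtain E where E: "E \<in> sets (PiM {..<T0} (\<lambda>_. P))"
      "1 - \<delta> / 2 \<le> measure (PiM {..<T0} (\<lambda>_. P)) E"
      "\<And>\<omega> c. \<omega> \<in> E \<Longrightarrow> 1 / real K + \<epsilon> < prob {x \<in> space P. q \<le> top_val (fst x) \<and> top_val (fst x) < c} \<Longrightarrow>
         real T0 / real K < real (card {i \<in> {..<T0}. q \<le> top_val (fst (\<omega> i)) \<and> top_val (fst (\<omega> i)) < c})"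
    using Hoeffding_count_lower_intervals[of "\<lambda>x. top_val (fst x)" "1 / real K + \<epsilon>" \<epsilon> T0 q]
      \<open>0 \<le> \<epsilon>\<close> K T0 unfolding confidence by (auto simp: add_pos_nonneg)
  show ?thesis
  proof (intro bexI[OF _ E(1)] conjI ballI)
    fix \<omega> assume "\<omega> \<in> E"
    obtain p where p: "p \<in> buyer_grid (sample_tops \<omega> T0) T0 K"
        "GFT P q - GFT P p \<le> 1 / real K + \<epsilon>"
      using GFT_buyer_grid_approximation[of q "1 / real K + \<epsilon>" K T0 \<omega>] E(3)[OF \<open>\<omega> \<in> E\<close>]
        q(1) \<open>0 \<le> \<epsilon>\<close> K T0 by auto
    moreover have "GFT P p \<le> Max (GFT P ` buyer_grid (sample_tops \<omega> T0) T0 K)"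
      using p(1) finite_buyer_grid by (intro Max_ge) auto
    ultimately show "(SUP q\<in>{0..1}. GFT P q) - Max (GFT P ` buyer_grid (sample_tops \<omega> T0) T0 K)
        \<le> 1 / real K + sqrt (ln (2 / \<delta>) / (2 * real T0))"
      unfolding SUP_eq \<epsilon>_def[symmetric] by linarith
  qed (use E(2) \<delta> in linarith)
qed

end
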